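(* Let $p$ be a prime and $G=S^1\times C_p$. There exists a continuous $G$-equivariant map $f_3:S(V_3)\to S(W_3)$, where $V_3=V_{1,1}\oplus V_{p,1}\oplus V_{p^2,1}$ and $W_3=V_{p^3,0}\oplus V_{0,1}$.
   Context: $S^1=\{t\in\mathbb{C}:|t|=1\}$, $C_p$ is cyclic of prime order $p$ with generator $a$, and elements of $G$ are written $ta^i$. Let $\xi_p=\exp(2\pi\sqrt{-1}/p)$. For $k\in\mathbb{Z}$ and $l\in\mathbb{Z}/p$, $V_{k,l}$ is the one-dimensional complex $G$-representation on $\mathbb{C}$ with $t\cdot z=t^kz$, $a\cdot z=\xi_p^lz$. $S(V)$ denotes the unit sphere of $V$. *)

theory Defs
  imports "HOL-Analysis.Analysis"
begin

definition xi :: "nat \<Rightarrow> complex" where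
  "xi p = exp (2 * of_real pi * \<i> / of_nat p)"

text \<open>Action of the element t a^i of G = S^1 x C_p on the one-dimensional
  representation V_{k,l}: z maps to t^k xi_p^(l i) z.  Here k is a natural number
  (all weights occurring below are nonnegative) and l is given by a natural representative.\<close>
definition actV :: "nat \<Rightarrow> nat \<Rightarrow> nat \<Rightarrow> complex \<Rightarrow> nat \<Rightarrow> complex \<Rightarrow> complex" where
  "actV p k l t i z = t ^ k * xi p ^ (l * i) * z"

text \<open>V_3 = V_{1,1} + V_{p,1} + V_{p^2,1}, realised on complex x complex x complex
  (the product norm is the Euclidean one).\<close>
definition actV3 :: "nat \<Rightarrow> complex \<Rightarrow> nat \<Rightarrow> complex \<times> complex \<times> complex \<Rightarrow> complex \<times> complex \<times> complex" where
  "actV3 p t i x = (case x of (z1, z2, z3) \<Rightarrow>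
     (actV p 1 1 t i z1, actV p p 1 t i z2, actV p (p^2) 1 t i z3))"

definition actW3 :: "nat \<Rightarrow> complex \<Rightarrow> nat \<Rightarrow> complex \<times> complex \<Rightarrow> complex \<times> complex" where
  "actW3 p t i w = (case w of (w1, w2) \<Rightarrow> (actV p (p^3) 0 t i w1, actV p 0 1 t i w2))"

end

theory Submission
  imports Defs
begin

text \<open>
  Put \<open>y = z1^(p^2) + z2^p\<close> (S^1-weight \<open>p^2\<close>, C_p-invariant) and
  \<open>m = cnj z1^p * z2\<close> (S^1-invariant, C_p-weight 1), and damp \<open>m\<close> to
  \<open>u = m * (|m^p| - Re (m^p))\<close>. Then
  \<open>Phi(z1, z2, z3) = (y^p - (-z3)^p, cnj y * z3 + u)\<close> is an equivariant continuous map
  \<open>V_3 \<rightarrow> W_3\<close>, and \<open>f = Phi / |Phi|\<close> works once \<open>Phi\<close> vanishes only at 0.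
  If both coordinates vanish then \<open>u^p = |y|^(2p)\<close> is a nonnegative real; the damping
  factor forbids this unless \<open>u = 0\<close>, i.e. \<open>m^p \<ge> 0\<close>, and then \<open>y = z3 = 0\<close>.
  But \<open>y = 0\<close> gives \<open>m^p = -|z1|^(2p^2)\<close>, so \<open>z1 = z2 = 0\<close>.
\<close>

definition real_defect :: "complex \<Rightarrow> real" where
  "real_defect w = norm w - Re w"

lemma real_defect_nonneg: "real_defect w \<ge> 0"
  using complex_Re_le_cmod[of w] by (simp add: real_defect_def)

lemma real_defect_eq_0_iff: "real_defect w = 0 \<longleftrightarrow> w \<in> \<real>\<^sub>\<ge>\<^sub>0"
proof
  assume "real_defect w = 0"
  then have "sqrt ((Re w)\<^sup>2 + (Im w)\<^sup>2) = Re w"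
    by (simp add: real_defect_def cmod_def)
  then have "Re w \<ge> 0" and "(Re w)\<^sup>2 + (Im w)\<^sup>2 = (Re w)\<^sup>2"
    by (metis real_sqrt_ge_zero zero_le_power2 add_nonneg_nonneg,
        metis real_sqrt_pow2 zero_le_power2 add_nonneg_nonneg)
  then show "w \<in> \<real>\<^sub>\<ge>\<^sub>0"
    by (simp add: complex_nonneg_Reals_iff)
qed (simp add: real_defect_def nonneg_Reals_cmod_eq_Re)

definition damp :: "nat \<Rightarrow> complex \<Rightarrow> complex" where
  "damp p m = m * of_real (real_defect (m ^ p))"

lemma damp_eq_0_iff:
  assumes "p > 0"
  shows "damp p m = 0 \<longleftrightarrow> m ^ p \<in> \<real>\<^sub>\<ge>\<^sub>0"
  using assms by (auto simp: damp_def real_defect_eq_0_iff)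

lemma damp_eq_0_if_power_nonneg_Reals:
  assumes "damp p m ^ p \<in> \<real>\<^sub>\<ge>\<^sub>0"
  shows "damp p m = 0"
proof (rule ccontr)
  define \<delta> where "\<delta> = real_defect (m ^ p)"
  assume "damp p m \<noteq> 0"
  then have "\<delta> \<noteq> 0"
    by (simp add: damp_def \<delta>_def)
  have "m ^ p = damp p m ^ p / of_real (\<delta> ^ p)"
    using \<open>\<delta> \<noteq> 0\<close> by (simp add: damp_def \<delta>_def power_mult_distrib)
  also have "\<dots> \<in> \<real>\<^sub>\<ge>\<^sub>0"
    using assms real_defect_nonneg[of "m ^ p"] by (simp add: \<delta>_def)
  finally have "\<delta> = 0"
    by (simp add: \<delta>_def real_defect_eq_0_iff)
  with \<open>\<delta> \<noteq> 0\<close> show False ..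
qed

lemma damp_mult_root_of_unity:
  assumes "e ^ p = 1"
  shows "damp p (e * m) = e * damp p m"
  using assms by (simp add: damp_def power_mult_distrib)

definition power_sum :: "nat \<Rightarrow> complex \<Rightarrow> complex \<Rightarrow> complex" where
  "power_sum p z1 z2 = z1 ^ (p^2) + z2 ^ p"

lemma power_sum_eq_0_imp:
  assumes "power_sum p z1 z2 = 0"
  shows "(cnj z1 ^ p * z2) ^ p = - of_real (norm z1 ^ (2 * p^2))"
proof -
  have "z2 ^ p = - (z1 ^ (p^2))"
    using assms by (simp add: power_sum_def add_eq_0_iff)
  then have "(cnj z1 ^ p * z2) ^ p = - ((z1 * cnj z1) ^ (p^2))"
    by (simp add: power2_eq_square algebra_simps flip: power_mult)
  then show ?thesis
    by (simp add: power_mult flip: complex_norm_square)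
qed

definition Phi :: "nat \<Rightarrow> complex \<times> complex \<times> complex \<Rightarrow> complex \<times> complex" where
  "Phi p = (\<lambda>(z1, z2, z3).
     (power_sum p z1 z2 ^ p - (- z3) ^ p, cnj (power_sum p z1 z2) * z3 + damp p (cnj z1 ^ p * z2)))"

lemma continuous_on_Phi: "continuous_on S (Phi p)"
  unfolding Phi_def power_sum_def damp_def real_defect_def case_prod_unfold
  by (intro continuous_intros)

lemma Phi_nonzero:
  assumes "p > 0" and "x \<noteq> 0"
  shows "Phi p x \<noteq> 0"
proof
  obtain z1 z2 z3 where x: "x = (z1, z2, z3)"
    by (cases x) auto
  define y where "y = power_sum p z1 z2"
  define m where "m = cnj z1 ^ p * z2"
  assume "Phi p x = 0"
  then have y_power: "y ^ p = (- z3) ^ p" and damp_m: "damp p m = - (cnj y * z3)"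
    by (simp_all add: Phi_def x y_def m_def zero_prod_def add_eq_0_iff)
  have "damp p m ^ p = (cnj y * y) ^ p"
    by (simp only: damp_m power_mult_distrib y_power flip: mult_minus_right)
  also have "\<dots> = of_real ((norm y ^ 2) ^ p)"
    by (metis complex_norm_square mult.commute of_real_power)
  finally have damp_m_power: "damp p m ^ p = of_real ((norm y ^ 2) ^ p)" .
  then have "damp p m = 0"
    by (intro damp_eq_0_if_power_nonneg_Reals) simp
  then have "m ^ p \<in> \<real>\<^sub>\<ge>\<^sub>0"
    using damp_eq_0_iff[OF \<open>p > 0\<close>] by simp
  have "y = 0"
    using damp_m_power \<open>damp p m = 0\<close> \<open>p > 0\<close> by (simp add: zero_power)
  then have "z3 = 0"
    using y_power \<open>p > 0\<close> by (simp add: zero_power)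
  have "m ^ p = - of_real (norm z1 ^ (2 * p^2))"
    using \<open>y = 0\<close> by (simp add: y_def m_def power_sum_eq_0_imp)
  with \<open>m ^ p \<in> \<real>\<^sub>\<ge>\<^sub>0\<close> have "norm z1 ^ (2 * p^2) \<le> 0"
    by (simp only: uminus_nonneg_Reals_iff nonpos_Reals_of_real_iff)
  then have "z1 = 0"
    by (metis not_le zero_less_norm_iff zero_less_power)
  then have "z2 = 0"
    using \<open>y = 0\<close> \<open>p > 0\<close> by (simp add: y_def power_sum_def zero_power)
  with \<open>z1 = 0\<close> \<open>z3 = 0\<close> x \<open>x \<noteq> 0\<close> show False
    by (simp add: zero_prod_def)
qed

lemma xi_power_self: "xi p ^ p = 1"
proof (cases "p = 0")
  case False
  then show ?thesis
    by (simp add: xi_def flip: exp_of_nat_mult)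
qed simp

lemma actV3_apply:
  "actV3 p t i (z1, z2, z3) = (t * xi p ^ i * z1, t ^ p * xi p ^ i * z2, t ^ p^2 * xi p ^ i * z3)"
  by (simp add: actV3_def actV_def)

lemma actW3_apply: "actW3 p t i (w1, w2) = (t ^ p^3 * w1, xi p ^ i * w2)"
  by (simp add: actW3_def actV_def)

lemma power_sum_equivariant:
  assumes "e ^ p = 1"
  shows "power_sum p (t * e * z1) (t ^ p * e * z2) = t ^ p^2 * power_sum p z1 z2"
proof -
  have "e ^ p^2 = 1"
    using assms by (simp add: power2_eq_square power_mult)
  with assms show ?thesis
    by (simp add: power_sum_def algebra_simps power2_eq_square flip: power_mult)
qed

lemma cnj_power_mult_equivariant:
  assumes "e ^ p = 1" and "cnj t * t = 1"
  shows "cnj (t * e * z1) ^ p * (t ^ p * e * z2) = e * (cnj z1 ^ p * z2)"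
proof -
  have "cnj (t * e * z1) ^ p * (t ^ p * e * z2) = (cnj t * t) ^ p * cnj (e ^ p) * e * (cnj z1 ^ p * z2)"
    by (simp add: algebra_simps)
  with assms show ?thesis
    by simp
qed

lemma Phi_equivariant:
  assumes "norm t = 1"
  shows "Phi p (actV3 p t i x) = actW3 p t i (Phi p x)"
proof -
  obtain z1 z2 z3 where x: "x = (z1, z2, z3)"
    by (cases x) auto
  define e where "e = xi p ^ i"
  define y where "y = power_sum p z1 z2"
  have e: "e ^ p = 1"
    by (metis e_def mult.commute power_mult power_one xi_power_self)
  have t: "cnj t * t = 1"
    using assms by (simp add: mult.commute flip: complex_norm_square)
  have "(t ^ p^2) ^ p = t ^ p^3"
    by (simp add: power3_eq_cube power2_eq_square flip: power_mult)
  then have first: "(t ^ p^2 * y) ^ p - (- (t ^ p^2 * e * z3)) ^ p = t ^ p^3 * (y ^ p - (- z3) ^ p)"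
    using e by (simp only: minus_mult_right power_mult_distrib)
      (simp add: right_diff_distrib)
  have "cnj (t ^ p^2 * y) * (t ^ p^2 * e * z3) = (cnj t * t) ^ p^2 * e * (cnj y * z3)"
    by (simp add: algebra_simps)
  then have second: "cnj (t ^ p^2 * y) * (t ^ p^2 * e * z3) = e * (cnj y * z3)"
    by (simp only: t power_one mult_1_left)
  have "Phi p (actV3 p t i x) = ((t ^ p^2 * y) ^ p - (- (t ^ p^2 * e * z3)) ^ p,
      cnj (t ^ p^2 * y) * (t ^ p^2 * e * z3) + e * damp p (cnj z1 ^ p * z2))"
    by (simp add: x Phi_def actV3_apply power_sum_equivariant[OF e]
        cnj_power_mult_equivariant[OF e t] damp_mult_root_of_unity[OF e] del: complex_cnj_mult flip: e_def y_def)
  also have "\<dots> = actW3 p t i (Phi p x)"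
    unfolding first second by (simp add: x Phi_def actW3_apply distrib_left flip: e_def y_def)
  finally show ?thesis .
qed

lemma actW3_scaleR: "actW3 p t i (c *\<^sub>R w) = c *\<^sub>R actW3 p t i w"
  by (cases w) (simp add: actW3_apply scaleR_conv_of_real algebra_simps)

lemma norm_actW3:
  assumes "norm t = 1"
  shows "norm (actW3 p t i w) = norm w"
  using assms by (cases w) (simp add: actW3_apply norm_Pair norm_mult norm_power xi_def)

lemma sgn_actW3:
  assumes "norm t = 1"
  shows "sgn (actW3 p t i w) = actW3 p t i (sgn w)"
  using assms by (simp add: sgn_div_norm norm_actW3 actW3_scaleR)

theorem proposition2p2:
  fixes p :: nat
  assumes "prime p"
  shows "\<exists>f :: complex \<times> complex \<times> complex \<Rightarrow> complex \<times> complex.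
           continuous_on (sphere 0 1) f \<and> f ` sphere 0 1 \<subseteq> sphere 0 1 \<and>
           (\<forall>t i x. norm t = 1 \<and> i < p \<and> x \<in> sphere 0 1 \<longrightarrow>
               f (actV3 p t i x) = actW3 p t i (f x))"
proof -
  have "p > 0"
    using assms by (simp add: prime_gt_0_nat)
  then have Phi_nonzero_sphere: "Phi p x \<noteq> 0" if "x \<in> sphere 0 1" for x
    using that by (intro Phi_nonzero) auto
  show ?thesis
  proof (intro exI conjI allI impI)
    show "continuous_on (sphere 0 1) (\<lambda>x. sgn (Phi p x))"
      using Phi_nonzero_sphere by (intro continuous_on_sgn continuous_on_Phi ballI)
    show "(\<lambda>x. sgn (Phi p x)) ` sphere 0 1 \<subseteq> sphere 0 1"
      using Phi_nonzero_sphere by (auto simp: norm_sgn)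
  next
    fix t :: complex and i :: nat and x :: "complex \<times> complex \<times> complex"
    assume "norm t = 1 \<and> i < p \<and> x \<in> sphere 0 1"
    then show "sgn (Phi p (actV3 p t i x)) = actW3 p t i (sgn (Phi p x))"
      by (simp add: Phi_equivariant sgn_actW3)
  qed
qed

end
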